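(* Let $d\ge1$ and let $B$ be a centered, isotropic, jointly measurable Gaussian field on $S^d$ with continuous covariance function $\kappa:[-1,1]\to\mathbb R$, $\mathbb E[B_xB_y]=\kappa(\langle x,y\rangle)$, $\kappa(1)=1$. Suppose there exist $C_1,\alpha,\epsilon>0$ such that $|\kappa(t)|<1$ for all $t\ne1$ and $1-\kappa(\cos\theta)\ge C_1|\theta|^\alpha$ for $|\theta|\le\epsilon$. Let $\mu$ be the volume measure on $S^d$ and $\varphi\in L^2(\mathbb R,\phi(x)dx)$. If $p\in\mathbb N$ satisfies $p\le d/\alpha$, then $Y(\varphi)=\int_{S^d}\varphi(B_x)\mu(dx)\in\mathbb D^{p,2}$.
   Context: Hermite polynomials: $H_0=1$, $H_1(x)=x$, $H_{q+1}(x)=xH_q(x)-qH_{q-1}(x)$; $\phi(x)=e^{-x^2/2}/\sqrt{2\pi}$. For $\varphi\in L^2(\mathbb R,\phi(x)dx)$, $a_q(\varphi)=\frac1{q!}\int_{\mathbb R}H_q\varphi\phi\,dx$, and $Y(\varphi)\in\mathbb D^{p,2}$ iff $\sum_{q\ge0}q^p\,q!\,a_q(\varphi)^2\int_{(S^d)^2}\kappa(\langle x,y\rangle)^q\,\mu(dx)\mu(dy)<\infty$. Isotropic means the law of $B$ is invariant under rotations. *)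

theory Defs
  imports "HOL-Probability.Probability"
begin

fun hermite :: "nat \<Rightarrow> real \<Rightarrow> real" where
  "hermite 0 x = 1"
| "hermite (Suc 0) x = x"
| "hermite (Suc (Suc q)) x = x * hermite (Suc q) x - real (Suc q) * hermite q x"

definition hermite_coeff :: "(real \<Rightarrow> real) \<Rightarrow> nat \<Rightarrow> real" where
  "hermite_coeff f q = (1 / fact q) * (LINT x|lborel. hermite q x * f x * std_normal_density x)"

definition L2_gauss :: "(real \<Rightarrow> real) \<Rightarrow> bool" where
  "L2_gauss f \<longleftrightarrow> f \<in> borel_measurable borel \<and>
     integrable lborel (\<lambda>x. (f x)\<^sup>2 * std_normal_density x)"

text \<open>The unit sphere S^d in R^(d+1), as a measurable space with its Borel sets.\<close>
definition sphere_space :: "('n::finite) itself \<Rightarrow> (real^'n) measure" where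
  "sphere_space _ = restrict_space borel (sphere (0::real^'n) 1)"

text \<open>Volume (surface) measure on the unit sphere: sigma(A) = (d+1) * Leb(cone over A
  inside the unit ball), i.e. (d+1) times the push-forward of Lebesgue measure on the
  punctured unit ball under x \<mapsto> x / |x|.\<close>
definition sphere_measure :: "('n::finite) itself \<Rightarrow> (real^'n) measure" where
  "sphere_measure T = scale_measure (ennreal (real CARD('n)))
     (distr (restrict_space lborel (ball (0::real^'n) 1 - {0})) (sphere_space T)
        (\<lambda>x. x /\<^sub>R norm x))"

text \<open>Joint Gaussianity:
  every finite linear combination is a centered Gaussian variable with the variance
  prescribed by the covariance (expressed via its characteristic function, which also
  covers degenerate combinations).\<close>
definition gaussian_field ::
  "'w measure \<Rightarrow> (real^'n::finite \<Rightarrow> 'w \<Rightarrow> real) \<Rightarrow> (real \<Rightarrow> real) \<Rightarrow> bool" where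
  "gaussian_field M B \<kappa> \<longleftrightarrow>
     prob_space M \<and>
     (\<lambda>(x, w). B x w) \<in> borel_measurable (sphere_space TYPE('n) \<Otimes>\<^sub>M M) \<and>
     (\<forall>x\<in>sphere 0 1. integrable M (B x) \<and> (LINT w|M. B x w) = 0) \<and>
     (\<forall>x\<in>sphere 0 1. \<forall>y\<in>sphere 0 1.
        integrable M (\<lambda>w. B x w * B y w) \<and> (LINT w|M. B x w * B y w) = \<kappa> (x \<bullet> y)) \<and>
     (\<forall>xs cs. set xs \<subseteq> sphere 0 1 \<longrightarrow> length cs = length xs \<longrightarrow>
        (\<forall>t::real. (LINT w|M. iexp (t * (\<Sum>i<length xs. cs ! i * B (xs ! i) w))) =
           complex_of_real (exp (- (t\<^sup>2 *
              (\<Sum>i<length xs. \<Sum>j<length xs. cs ! i * cs ! j * \<kappa> (xs ! i \<bullet> xs ! j))) / 2))))"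

text \<open>Isotropy: the law of B is invariant under rotations (orthogonal maps of R^(d+1)):
  for every orthogonal R, the finite-dimensional laws of (B_{Rx}) and (B_x) agree,
  expressed through the joint characteristic functions.\<close>
definition isotropic_field :: "'w measure \<Rightarrow> (real^'n::finite \<Rightarrow> 'w \<Rightarrow> real) \<Rightarrow> bool" where
  "isotropic_field M B \<longleftrightarrow>
     (\<forall>R::real^'n \<Rightarrow> real^'n. orthogonal_transformation R \<longrightarrow>
        (\<forall>xs cs. set xs \<subseteq> sphere 0 1 \<longrightarrow> length cs = length xs \<longrightarrow>
           (LINT w|M. iexp (\<Sum>i<length xs. cs ! i * B (R (xs ! i)) w)) =
           (LINT w|M. iexp (\<Sum>i<length xs. cs ! i * B (xs ! i) w))))"

text \<open>Membership Y(f) = int_{S^d} f(B_x) mu(dx) in D^{p,2}, via the criterion of the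
  paper's context: sum_q q^p q! a_q(f)^2 int int kappa(<x,y>)^q mu(dx) mu(dy) < infinity.\<close>
definition in_D_p2 ::
  "(real^'n::finite) measure \<Rightarrow> (real \<Rightarrow> real) \<Rightarrow> (real \<Rightarrow> real) \<Rightarrow> nat \<Rightarrow> bool" where
  "in_D_p2 \<mu> \<kappa> f p \<longleftrightarrow>
     summable (\<lambda>q. real q ^ p * fact q * (hermite_coeff f q)\<^sup>2 *
        (LINT x|\<mu>. LINT y|\<mu>. (\<kappa> (x \<bullet> y)) ^ q))"

end

theory Submission
  imports Defs "HOL-Computational_Algebra.Polynomial"
begin

text \<open>
  By Bessel's inequality for the orthogonal Hermite basis of L^2(\<phi>) the series
  \<Sum> q! a_q(f)^2 converges, so it suffices that q^p \<integral>\<integral> \<kappa>(\<langle>x,y\<rangle>)^q stays bounded.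
  On [-1, t0] the continuous covariance satisfies |\<kappa>| \<le> \<rho> < 1, contributing O(\<rho>^q); near
  t = 1 the Hoelder condition gives |\<kappa> t|^q \<le> exp(-q C1 (1 - t^2)^(\<alpha>/2)). For fixed x this is
  exponentially small outside the tube of width h = q^(-1/\<alpha>) around the axis through x;
  covering the ball by tubes of radius (j+1) h shows that this part contributes
  O(h^d) = O(q^(-d/\<alpha>)) with d = CARD('n) - 1, and p \<le> d/\<alpha> makes q^p q^(-d/\<alpha>) \<le> 1.
\<close>

section \<open>Hermite polynomials and Bessel's inequality\<close>

fun hermite_poly :: "nat \<Rightarrow> real poly" where
  "hermite_poly 0 = 1"
| "hermite_poly (Suc 0) = [:0, 1:]"
| "hermite_poly (Suc (Suc q)) = [:0, 1:] * hermite_poly (Suc q) - smult (real (Suc q)) (hermite_poly q)"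

lemma poly_hermite_poly [simp]: "poly (hermite_poly q) x = hermite q x"
  by (induction q rule: hermite_poly.induct) (auto simp: algebra_simps)

lemma pderiv_hermite_poly:
  "pderiv (hermite_poly (Suc q)) = smult (real (Suc q)) (hermite_poly q)"
proof (induction q rule: hermite_poly.induct)
  case 1
  then show ?case by (simp add: pderiv_pCons)
next
  case 2
  then show ?case by (simp add: pderiv_pCons pderiv_diff pderiv_mult)
next
  case (3 q)
  let ?H = hermite_poly and ?X = "[:0, 1:] :: real poly"
  have "pderiv (?H (Suc (Suc (Suc q)))) =
      ?H (Suc (Suc q)) + ?X * pderiv (?H (Suc (Suc q))) - smult (real (Suc (Suc q))) (pderiv (?H (Suc q)))"
    by (simp only: hermite_poly.simps(3)[of "Suc q"] pderiv_diff pderiv_mult pderiv_smult)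
       (simp add: pderiv_pCons)
  also have "\<dots> = ?H (Suc (Suc q)) + smult (real (Suc (Suc q))) (?H (Suc (Suc q)))"
    using 3 by (simp del: hermite_poly.simps add: hermite_poly.simps(3)[of q] smult_diff_right algebra_simps)
  also have "\<dots> = smult (1 + real (Suc (Suc q))) (?H (Suc (Suc q)))"
    by (simp only: smult_add_left smult_1_left)
  finally show ?case
    by (simp del: hermite_poly.simps)
qed

definition gauss_expect :: "real poly \<Rightarrow> real" where
  "gauss_expect g = (LINT x|lborel. std_normal_density x * poly g x)"

lemma integrable_std_normal_poly: "integrable lborel (\<lambda>x. std_normal_density x * poly g x)"
proof -
  have "(\<lambda>x. std_normal_density x * poly g x) =
        (\<lambda>x. \<Sum>i\<le>degree g. coeff g i * (std_normal_density x * x ^ i))"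
    by (simp add: poly_altdef sum_distrib_left mult.left_commute)
  then show ?thesis
    by (simp add: integrable_std_normal_moment)
qed

lemma gauss_expect_add: "gauss_expect (g + h) = gauss_expect g + gauss_expect h"
  and gauss_expect_diff: "gauss_expect (g - h) = gauss_expect g - gauss_expect h"
  and gauss_expect_smult: "gauss_expect (smult c g) = c * gauss_expect g"
  using integrable_std_normal_poly[of g] integrable_std_normal_poly[of h]
  by (simp_all add: gauss_expect_def algebra_simps)

lemma integral_std_normal_moment_Suc_Suc:
  "(LINT x|lborel. std_normal_density x * x ^ Suc (Suc k)) =
     real (Suc k) * (LINT x|lborel. std_normal_density x * x ^ k)"
proof (cases "even k")
  case True
  then obtain j where j: "k = 2 * j" by blast
  have "2 * Suc j = Suc (Suc (2 * j))" by simp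
  then have "(fact (2 * Suc j) :: real) = (2 * (real j + 1)) * ((2 * real j + 1) * fact (2 * j))"
    by (simp only: fact_Suc) (simp add: algebra_simps)
  moreover have "(2 ^ Suc j * fact (Suc j) :: real) = (2 * (real j + 1)) * (2 ^ j * fact j)"
    by (simp add: algebra_simps)
  ultimately have "(fact (2 * Suc j) :: real) / (2 ^ Suc j * fact (Suc j)) =
      real (Suc (2 * j)) * (fact (2 * j) / (2 ^ j * fact j))"
    by (simp only: mult_divide_mult_cancel_left_if) simp
  then show ?thesis
    using integral_std_normal_moment_even[of j] integral_std_normal_moment_even[of "Suc j"] j
    by simp
next
  case False
  then obtain j where "k = 2 * j + 1" by (blast elim: oddE)
  then show ?thesis
    using integral_std_normal_moment_odd[of j] integral_std_normal_moment_odd[of "Suc j"] by simp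
qed

lemma gauss_expect_monom:
  "gauss_expect (monom c i) = c * (LINT x|lborel. std_normal_density x * x ^ i)"
  by (simp add: gauss_expect_def poly_monom algebra_simps)

text \<open>Gaussian integration by parts \<open>E[X g(X)] = E[g'(X)]\<close>; \<open>pCons 0 g\<close> is the polynomial \<open>x g(x)\<close>.\<close>

lemma gauss_expect_pCons_0: "gauss_expect (pCons 0 g) = gauss_expect (pderiv g)"
proof -
  have monom: "gauss_expect (pCons 0 (monom c i)) = gauss_expect (pderiv (monom c i))" for c i
  proof (cases i)
    case 0
    then show ?thesis
      using integral_std_normal_moment_odd[of 0]
      by (simp add: monom_Suc[symmetric] gauss_expect_monom pderiv_monom, simp add: gauss_expect_def)
  next
    case (Suc j)
    then have "pCons 0 (monom c i) = monom c (Suc (Suc j))"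
      and "pderiv (monom c i) = monom (real (Suc j) * c) j"
      by (simp add: monom_Suc, simp add: pderiv_monom)
    then show ?thesis
      by (simp only: gauss_expect_monom integral_std_normal_moment_Suc_Suc mult_ac)
  qed
  have "gauss_expect (pCons 0 (\<Sum>i\<le>n. monom (coeff g i) i)) =
        gauss_expect (pderiv (\<Sum>i\<le>n. monom (coeff g i) i))" for n
  proof (induction n)
    case (Suc n)
    have "gauss_expect (pCons 0 (a + b)) = gauss_expect (pCons 0 a) + gauss_expect (pCons 0 b)" for a b
      by (metis add_pCons add_0 gauss_expect_add)
    with Suc show ?case
      by (simp only: sum.atMost_Suc pderiv_add gauss_expect_add monom)
  qed (simp add: monom)
  from this[of "degree g"] show ?thesis
    by (simp only: poly_as_sum_of_monoms)
qed

lemma gauss_expect_hermite_mult: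
  "gauss_expect (hermite_poly q * g) = gauss_expect ((pderiv ^^ q) g)"
proof (induction q arbitrary: g rule: hermite_poly.induct)
  case 1
  then show ?case by simp
next
  case 2
  then show ?case by (simp add: gauss_expect_pCons_0)
next
  case (3 q)
  let ?H = hermite_poly and ?c = "real (Suc q)"
  have "?H (Suc (Suc q)) * g = pCons 0 (?H (Suc q) * g) - smult ?c (?H q * g)"
    by (simp add: algebra_simps)
  have "pderiv (?H (Suc q) * g) = ?H (Suc q) * pderiv g + smult ?c (?H q * g)"
    by (simp del: hermite_poly.simps add: pderiv_mult pderiv_hermite_poly algebra_simps)
  have "gauss_expect (?H (Suc (Suc q)) * g) =
      gauss_expect (pCons 0 (?H (Suc q) * g)) - ?c * gauss_expect (?H q * g)"
    by (simp only: \<open>?H (Suc (Suc q)) * g = _\<close> gauss_expect_diff gauss_expect_smult)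
  also have "gauss_expect (pCons 0 (?H (Suc q) * g)) =
      gauss_expect (?H (Suc q) * pderiv g) + ?c * gauss_expect (?H q * g)"
    by (simp del: hermite_poly.simps add: \<open>pderiv (?H (Suc q) * g) = _\<close> gauss_expect_pCons_0
        gauss_expect_add gauss_expect_smult)
  also have "gauss_expect (?H (Suc q) * pderiv g) = gauss_expect ((pderiv ^^ Suc (Suc q)) g)"
    using "3.IH"(1) by (simp del: funpow.simps add: funpow_Suc_right)
  finally show ?case by simp
qed

lemma higher_pderiv_hermite_poly:
  "(pderiv ^^ k) (hermite_poly (k + r)) = smult (fact (k + r) / fact r) (hermite_poly r)"
proof (induction k)
  case 0
  then show ?case by simp
next
  case (Suc k)
  have "(pderiv ^^ Suc k) (hermite_poly (Suc k + r)) =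
      smult (real (Suc (k + r))) ((pderiv ^^ k) (hermite_poly (k + r)))"
    by (simp del: funpow.simps add: funpow_Suc_right pderiv_hermite_poly higher_pderiv_smult)
  then show ?case
    using Suc by (simp add: field_simps)
qed

lemma gauss_expect_hermite_hermite:
  "gauss_expect (hermite_poly q * hermite_poly r) = (if q = r then fact q else 0)"
proof -
  have lt: "gauss_expect (hermite_poly q * hermite_poly r) = 0" if "r < q" for q r
  proof -
    obtain k where k: "q = Suc k + r"
      using \<open>r < q\<close> by (auto dest: less_imp_Suc_add)
    have "(pderiv ^^ r) (hermite_poly r) = [:fact r:]"
      using higher_pderiv_hermite_poly[of r 0] by simp
    then have "(pderiv ^^ q) (hermite_poly r) = 0"
      by (simp only: k funpow_add funpow_Suc_right o_apply) (simp add: pderiv_pCons)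
    then show ?thesis
      by (simp only: gauss_expect_hermite_mult) (simp add: gauss_expect_def)
  qed
  moreover have "gauss_expect (hermite_poly q * hermite_poly q) = fact q"
    using higher_pderiv_hermite_poly[of q 0] integral_std_normal_moment_even[of 0]
    by (simp only: gauss_expect_hermite_mult) (simp add: gauss_expect_def)
  ultimately show ?thesis
    using lt[of q r] lt[of r q] by (cases q r rule: linorder_cases) (auto simp: mult.commute)
qed

lemma hermite_eq_poly: "hermite q = poly (hermite_poly q)"
  by (rule ext) simp

lemma borel_measurable_hermite [measurable]: "hermite q \<in> borel_measurable borel"
  unfolding hermite_eq_poly by (intro borel_measurable_continuous_onI continuous_intros)

lemma integrable_std_normal_hermite_hermite:
  "integrable lborel (\<lambda>x. std_normal_density x * (hermite q x * hermite r x))"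
  using integrable_std_normal_poly[of "hermite_poly q * hermite_poly r"] by simp

lemma integral_std_normal_hermite_hermite:
  "(LINT x|lborel. std_normal_density x * (hermite q x * hermite r x)) = (if q = r then fact q else 0)"
  using gauss_expect_hermite_hermite[of q r] by (simp add: gauss_expect_def)

lemma integrable_hermite_mult_L2_gauss:
  assumes "L2_gauss f"
  shows "integrable lborel (\<lambda>x. hermite q x * f x * std_normal_density x)"
proof -
  have f [measurable]: "f \<in> borel_measurable borel"
    and f2: "integrable lborel (\<lambda>x. (f x)\<^sup>2 * std_normal_density x)"
    using assms by (auto simp: L2_gauss_def)
  have "integrable lborel
      (\<lambda>x. (f x)\<^sup>2 * std_normal_density x + std_normal_density x * (hermite q x * hermite q x))"
    using f2 integrable_std_normal_hermite_hermite[of q q] by simp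
  then show ?thesis
  proof (rule Bochner_Integration.integrable_bound)
    show "(\<lambda>x. hermite q x * f x * std_normal_density x) \<in> borel_measurable lborel"
      by measurable
    show "AE x in lborel. norm (hermite q x * f x * std_normal_density x)
        \<le> norm ((f x)\<^sup>2 * std_normal_density x + std_normal_density x * (hermite q x * hermite q x))"
    proof (rule AE_I2)
      fix x
      have "2 * (\<bar>hermite q x\<bar> * \<bar>f x\<bar>) \<le> (hermite q x)\<^sup>2 + (f x)\<^sup>2"
        using sum_squares_bound[of "\<bar>hermite q x\<bar>" "\<bar>f x\<bar>"] by (simp add: mult.assoc)
      moreover have "0 \<le> \<bar>hermite q x\<bar> * \<bar>f x\<bar>"
        by simp
      ultimately have "\<bar>hermite q x * f x\<bar> \<le> (f x)\<^sup>2 + (hermite q x)\<^sup>2"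
        unfolding abs_mult by linarith
      then have "\<bar>hermite q x * f x\<bar> * std_normal_density x
          \<le> ((f x)\<^sup>2 + (hermite q x)\<^sup>2) * std_normal_density x"
        by (rule mult_right_mono) simp
      then show "norm (hermite q x * f x * std_normal_density x)
          \<le> norm ((f x)\<^sup>2 * std_normal_density x + std_normal_density x * (hermite q x * hermite q x))"
        by (simp add: abs_mult power2_eq_square algebra_simps)
    qed
  qed
qed

lemma hermite_bessel_inequality:
  assumes f: "L2_gauss f"
  shows "(\<Sum>q<N. fact q * (hermite_coeff f q)\<^sup>2) \<le> (LINT x|lborel. (f x)\<^sup>2 * std_normal_density x)"
proof -
  let ?\<phi> = std_normal_density and ?a = "hermite_coeff f"
  define F where "F x = (\<Sum>q<N. ?a q * hermite q x)" for x
  have fH: "(LINT x|lborel. hermite q x * f x * ?\<phi> x) = fact q * ?a q" for q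
    by (simp add: hermite_coeff_def)
  have expand: "(f x - F x)\<^sup>2 * ?\<phi> x = (f x)\<^sup>2 * ?\<phi> x - 2 * (\<Sum>q<N. ?a q * (hermite q x * f x * ?\<phi> x))
      + (\<Sum>q<N. \<Sum>r<N. ?a q * ?a r * (?\<phi> x * (hermite q x * hermite r x)))" for x
  proof -
    have "F x * f x * ?\<phi> x = (\<Sum>q<N. ?a q * (hermite q x * f x * ?\<phi> x))"
      unfolding F_def by (simp add: sum_distrib_right mult.assoc)
    moreover have "F x * F x * ?\<phi> x = (\<Sum>q<N. \<Sum>r<N. ?a q * ?a r * (?\<phi> x * (hermite q x * hermite r x)))"
      unfolding F_def sum_product by (simp add: sum_distrib_right sum_distrib_left mult_ac)
    ultimately show ?thesis
      by (simp add: power2_eq_square algebra_simps)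
  qed
  have "0 \<le> (LINT x|lborel. (f x - F x)\<^sup>2 * ?\<phi> x)"
    by (rule integral_nonneg_AE) simp
  also have "\<dots> = (LINT x|lborel. (f x)\<^sup>2 * ?\<phi> x) - 2 * (\<Sum>q<N. ?a q * (fact q * ?a q))
      + (\<Sum>q<N. \<Sum>r<N. ?a q * ?a r * (if q = r then fact q else 0))"
    using f integrable_hermite_mult_L2_gauss[OF f] integrable_std_normal_hermite_hermite
    unfolding expand
    by (simp add: L2_gauss_def fH integral_std_normal_hermite_hermite)
  also have "\<dots> = (LINT x|lborel. (f x)\<^sup>2 * ?\<phi> x) - (\<Sum>q<N. fact q * (?a q)\<^sup>2)"
    by (simp add: if_distrib power2_eq_square sum_distrib_left[symmetric] mult_ac
        cong: if_cong)
  finally show ?thesis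
    by simp
qed

lemma summable_hermite_coeff_sq:
  assumes "L2_gauss f"
  shows "summable (\<lambda>q. fact q * (hermite_coeff f q)\<^sup>2)"
  using hermite_bessel_inequality[OF assms] by (intro summableI_nonneg_bounded) auto

section \<open>The surface measure of the sphere\<close>

lemma space_sphere_measure: "space (sphere_measure TYPE('n::finite)) = sphere (0::real^'n) 1"
  by (simp add: sphere_measure_def sphere_space_def space_restrict_space space_scale_measure)

lemma nn_integral_sphere_measure:
  fixes g :: "real^'n::finite \<Rightarrow> ennreal"
  assumes g [measurable]: "g \<in> borel_measurable borel"
  shows "(\<integral>\<^sup>+y. g y \<partial>sphere_measure TYPE('n)) =
    real CARD('n) * (\<integral>\<^sup>+z. g (z /\<^sub>R norm z) * indicator (ball 0 1 - {0}) z \<partial>lborel)"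
proof -
  let ?M = "restrict_space lborel (ball (0::real^'n) 1 - {0})"
  have normalize: "(\<lambda>z. z /\<^sub>R norm z) \<in> measurable ?M (sphere_space TYPE('n))"
    unfolding sphere_space_def by (rule measurable_restrict_space3) auto
  have "g \<in> borel_measurable (sphere_space TYPE('n))"
    unfolding sphere_space_def by (rule measurable_restrict_space1) simp
  then have gd: "g \<in> borel_measurable (distr ?M (sphere_space TYPE('n)) (\<lambda>z. z /\<^sub>R norm z))"
    by (simp cong: measurable_cong_sets)
  have "(ball (0::real^'n) 1 - {0}) \<inter> space lborel \<in> sets lborel"
    by (simp add: borel_open open_Diff)
  then show ?thesis
    unfolding sphere_measure_def
    by (simp add: nn_integral_scale_measure[OF gd] nn_integral_distr[OF normalize gd]
        nn_integral_restrict_space)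
qed

lemma cball_subset_cbox_One:
  fixes c :: "'a::euclidean_space"
  shows "cball c s \<subseteq> cbox (c - s *\<^sub>R One) (c + s *\<^sub>R One)"
proof
  fix z assume "z \<in> cball c s"
  then have "\<bar>(z - c) \<bullet> b\<bar> \<le> s" if "b \<in> Basis" for b
    using Basis_le_norm[OF that, of "z - c"] by (simp add: dist_norm norm_minus_commute)
  then show "z \<in> cbox (c - s *\<^sub>R One) (c + s *\<^sub>R One)"
    by (auto simp: mem_box abs_le_iff algebra_simps)
qed

lemma emeasure_cball_le:
  fixes c :: "'a::euclidean_space"
  assumes "0 \<le> s"
  shows "emeasure lborel (cball c s) \<le> ennreal ((2 * s) ^ DIM('a))"
proof -
  have "emeasure lborel (cball c s) \<le> emeasure lborel (cbox (c - s *\<^sub>R One) (c + s *\<^sub>R One))"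
    by (intro emeasure_mono cball_subset_cbox_One) simp
  also have "\<dots> = ennreal (\<Prod>b\<in>(Basis :: 'a set). 2 * s)"
    using assms by (simp add: emeasure_lborel_cbox_eq inner_diff_left inner_add_left)
  also have "\<dots> = ennreal ((2 * s) ^ DIM('a))"
    by simp
  finally show ?thesis .
qed

lemma emeasure_sphere_measure_le:
  "emeasure (sphere_measure TYPE('n::finite)) (space (sphere_measure TYPE('n)))
     \<le> ennreal (real CARD('n) * 2 ^ CARD('n))"
proof -
  have "emeasure (sphere_measure TYPE('n)) (space (sphere_measure TYPE('n)))
      = (\<integral>\<^sup>+y. 1 \<partial>sphere_measure TYPE('n))"
    by simp
  also have "\<dots> = real CARD('n) * (\<integral>\<^sup>+z. indicator (ball (0::real^'n) 1 - {0}) z \<partial>lborel)"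
    by (subst nn_integral_sphere_measure) auto
  also have "\<dots> = real CARD('n) * emeasure lborel (ball (0::real^'n) 1 - {0})"
    by (simp add: borel_open open_Diff)
  also have "\<dots> \<le> real CARD('n) * emeasure lborel (cball (0::real^'n) 1)"
    by (intro mult_left_mono emeasure_mono) auto
  also have "\<dots> \<le> real CARD('n) * ennreal (2 ^ CARD('n))"
    using emeasure_cball_le[of 1 "0::real^'n"] by (intro mult_left_mono) auto
  finally show ?thesis
    by (simp add: ennreal_mult)
qed

lemma abs_integral_le_of_nn_integral_le:
  fixes g :: "'a \<Rightarrow> real"
  assumes "(\<integral>\<^sup>+y. ennreal \<bar>g y\<bar> \<partial>M) \<le> ennreal B" and "0 \<le> B"
  shows "\<bar>integral\<^sup>L M g\<bar> \<le> B"
proof (cases "integrable M g")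
  case True
  then have "ennreal \<bar>integral\<^sup>L M g\<bar> \<le> ennreal B"
    using integral_norm_bound_ennreal[of M g] assms(1) by simp
  then show ?thesis
    using assms(2) by simp
next
  case False
  then show ?thesis
    using assms(2) by (simp add: not_integrable_integral_eq)
qed

lemma abs_sphere_double_integral_le:
  fixes f :: "real^'n::finite \<Rightarrow> real^'n \<Rightarrow> real"
  assumes B: "0 \<le> B" and inner: "\<And>x. x \<in> sphere 0 1 \<Longrightarrow> \<bar>LINT y|sphere_measure TYPE('n). f x y\<bar> \<le> B"
  shows "\<bar>LINT x|sphere_measure TYPE('n). LINT y|sphere_measure TYPE('n). f x y\<bar>
    \<le> B * (real CARD('n) * 2 ^ CARD('n))"
proof (rule abs_integral_le_of_nn_integral_le)
  let ?\<sigma> = "sphere_measure TYPE('n)"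
  have "(\<integral>\<^sup>+x. ennreal \<bar>LINT y|?\<sigma>. f x y\<bar> \<partial>?\<sigma>) \<le> (\<integral>\<^sup>+x. ennreal B \<partial>?\<sigma>)"
    using inner by (intro nn_integral_mono ennreal_leI) (simp add: space_sphere_measure)
  also have "\<dots> = ennreal B * emeasure ?\<sigma> (space ?\<sigma>)"
    by simp
  also have "\<dots> \<le> ennreal B * ennreal (real CARD('n) * 2 ^ CARD('n))"
    by (intro mult_left_mono emeasure_sphere_measure_le) simp
  finally show "(\<integral>\<^sup>+x. ennreal \<bar>LINT y|?\<sigma>. f x y\<bar> \<partial>?\<sigma>) \<le> ennreal (B * (real CARD('n) * 2 ^ CARD('n)))"
    using B by (simp add: ennreal_mult)
qed (use B in simp)

section \<open>Integrals decaying away from an axis\<close>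

lemma norm_reject_le:
  fixes x z :: "'a::euclidean_space"
  assumes x: "norm x = 1" and z: "z \<noteq> 0" "norm z \<le> 1"
  shows "norm (z - (z \<bullet> x) *\<^sub>R x) \<le> sqrt (1 - (x \<bullet> (z /\<^sub>R norm z))\<^sup>2)"
proof -
  define b where "b = (norm z)\<^sup>2"
  define a where "a = (z \<bullet> x)\<^sup>2"
  have "x \<bullet> x = 1"
    using x by (simp add: dot_square_norm)
  then have reject: "(norm (z - (z \<bullet> x) *\<^sub>R x))\<^sup>2 = b - a"
    unfolding b_def a_def power2_norm_eq_inner
    by (simp add: inner_commute power2_eq_square algebra_simps)
  have "\<bar>z \<bullet> x\<bar> \<le> norm z"
    using Cauchy_Schwarz_ineq2[of z x] x by simp
  then have "a \<le> b"
    unfolding a_def b_def by (metis abs_ge_zero power2_abs power_mono)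
  have "0 < b" "b \<le> 1"
    using z by (simp_all add: b_def power_le_one)
  have "(x \<bullet> (z /\<^sub>R norm z))\<^sup>2 = a / b"
    by (simp add: a_def b_def inner_commute divide_inverse power_mult_distrib power_inverse)
  moreover have "b - a \<le> 1 - a / b"
  proof -
    have "(b - a) * b \<le> b - a"
      using \<open>a \<le> b\<close> \<open>b \<le> 1\<close> by (simp add: mult_left_le)
    then show ?thesis
      using \<open>0 < b\<close> by (simp add: field_simps)
  qed
  ultimately show ?thesis
    using reject by (metis norm_ge_zero real_sqrt_le_mono real_sqrt_unique)
qed

definition tube :: "'a::euclidean_space \<Rightarrow> real \<Rightarrow> 'a set" where
  "tube x r = {z. norm z < 1 \<and> norm (z - (z \<bullet> x) *\<^sub>R x) < r}"

lemma tube_in_sets [measurable]: "tube x r \<in> sets borel"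
proof -
  have "open (tube x r)"
    unfolding tube_def by (intro open_Collect_conj open_Collect_less continuous_intros)
  then show ?thesis
    by (simp add: borel_open)
qed

lemma tube_subset_UN_cball:
  fixes x :: "'a::euclidean_space"
  assumes x: "norm x = 1" and r: "r > 0"
  shows "tube x r \<subseteq> (\<Union>j\<in>{-\<lceil>1/r\<rceil>..\<lceil>1/r\<rceil>}. cball ((of_int j * r) *\<^sub>R x) (2 * r))"
proof
  fix z assume "z \<in> tube x r"
  then have z1: "norm z < 1" and z2: "norm (z - (z \<bullet> x) *\<^sub>R x) < r"
    by (auto simp: tube_def)
  define t where "t = z \<bullet> x"
  define j where "j = \<lfloor>t / r\<rfloor>"
  have "\<bar>t\<bar> < 1"
    using Cauchy_Schwarz_ineq2[of z x] x z1 by (simp add: t_def)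
  then have "-1/r < t/r" "t/r < 1/r"
    using r by (auto simp: field_simps)
  then have "j \<in> {-\<lceil>1/r\<rceil>..\<lceil>1/r\<rceil>}"
    unfolding j_def by (simp add: floor_le_iff le_floor_iff) linarith
  have "of_int j * r \<le> t" "t < (of_int j + 1) * r"
    using floor_divide_lower[OF r] floor_divide_upper[OF r] by (simp_all add: j_def)
  then have "norm ((t - of_int j * r) *\<^sub>R x) < r"
    using x by (simp add: distrib_right)
  then have "norm (z - (of_int j * r) *\<^sub>R x) < 2 * r"
    using norm_triangle_ineq[of "z - t *\<^sub>R x" "(t - of_int j * r) *\<^sub>R x"] z2
    by (simp add: t_def algebra_simps)
  then show "z \<in> (\<Union>j\<in>{-\<lceil>1/r\<rceil>..\<lceil>1/r\<rceil>}. cball ((of_int j * r) *\<^sub>R x) (2 * r))"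
    by (intro UN_I[OF \<open>j \<in> _\<close>]) (simp add: dist_norm norm_minus_commute)
qed

lemma emeasure_tube_le:
  fixes x :: "'a::euclidean_space"
  assumes "norm x = 1" and r: "r > 0"
  shows "emeasure lborel (tube x r) \<le> ennreal ((2 / r + 3) * (4 * r) ^ DIM('a))"
proof -
  let ?J = "{-\<lceil>1/r\<rceil>..\<lceil>1/r\<rceil>}"
  have "0 < \<lceil>1/r\<rceil>"
    using r by simp
  then have "real (card ?J) = 2 * real_of_int \<lceil>1/r\<rceil> + 1"
    by (simp del: zero_less_ceiling)
  then have "real (card ?J) \<le> 2 / r + 3"
    using ceiling_correct[of "1/r"] by linarith
  have "emeasure lborel (tube x r) \<le> emeasure lborel (\<Union>j\<in>?J. cball ((of_int j * r) *\<^sub>R x) (2 * r))"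
    by (intro emeasure_mono tube_subset_UN_cball assms) auto
  also have "\<dots> \<le> (\<Sum>j\<in>?J. emeasure lborel (cball ((of_int j * r) *\<^sub>R x) (2 * r)))"
    by (intro emeasure_subadditive_finite) auto
  also have "\<dots> \<le> (\<Sum>j\<in>?J. ennreal ((4 * r) ^ DIM('a)))"
    using emeasure_cball_le[of "2 * r"] r by (intro sum_mono) simp
  also have "\<dots> = ennreal (real (card ?J) * (4 * r) ^ DIM('a))"
    using r by (simp add: ennreal_of_nat_eq_real_of_nat ennreal_mult)
  also have "\<dots> \<le> ennreal ((2 / r + 3) * (4 * r) ^ DIM('a))"
    using \<open>real (card ?J) \<le> 2 / r + 3\<close> r by (intro ennreal_leI mult_right_mono) auto
  finally show ?thesis .
qed

lemma power_mult_exp_neg_le: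
  assumes "y \<ge> 0" and "m > 0"
  shows "y ^ m * exp (- y) \<le> real m ^ m"
proof -
  have "(y / real m) ^ m \<le> (1 + y / real m) ^ m"
    using assms by (intro power_mono) auto
  also have "\<dots> \<le> exp y"
    using assms by (intro exp_ge_one_plus_x_over_n_power_n) auto
  finally have "y ^ m \<le> real m ^ m * exp y"
    using assms by (simp add: field_simps)
  then show ?thesis
    by (simp add: exp_minus field_simps)
qed

lemma summable_exp_neg_powr_mult_power:
  assumes c: "c > 0" and \<alpha>: "\<alpha> > 0"
  shows "summable (\<lambda>j. exp (- (c * real j powr \<alpha>)) * real (Suc j) ^ k)"
proof -
  define m where "m = nat \<lceil>(real k + 2) / \<alpha>\<rceil> + 1"
  have "(real k + 2) / \<alpha> \<le> real m"
    unfolding m_def by linarith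
  then have "real k + 2 \<le> real m * \<alpha>"
    using \<alpha> by (simp add: field_simps)
  have "m > 0"
    by (simp add: m_def)
  define K where "K = real m ^ m / c ^ m * 2 ^ k"
  show ?thesis
  proof (rule summable_comparison_test')
    show "summable (\<lambda>j. K * real j powr (- 2))"
      by (intro summable_mult) (simp add: summable_real_powr_iff)
    fix j :: nat assume "j \<ge> 1"
    then have j: "real j \<ge> 1" by simp
    have "(c * real j powr \<alpha>) ^ m * exp (- (c * real j powr \<alpha>)) \<le> real m ^ m"
      using c \<open>m > 0\<close> by (intro power_mult_exp_neg_le) auto
    then have "exp (- (c * real j powr \<alpha>)) \<le> real m ^ m / c ^ m * real j powr (- (real m * \<alpha>))"
      using c j by (simp add: powr_power powr_minus field_simps)
    moreover have "real (Suc j) ^ k \<le> 2 ^ k * real j powr real k"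
      using j power_mono[of "real (Suc j)" "2 * real j" k] by (simp add: powr_realpow)
    ultimately have "exp (- (c * real j powr \<alpha>)) * real (Suc j) ^ k
        \<le> (real m ^ m / c ^ m * real j powr (- (real m * \<alpha>))) * (2 ^ k * real j powr real k)"
      using c by (intro mult_mono) auto
    also have "\<dots> = K * (real j powr (- (real m * \<alpha>)) * real j powr real k)"
      by (simp add: K_def)
    also have "\<dots> \<le> K * real j powr (- 2)"
      using \<open>real k + 2 \<le> real m * \<alpha>\<close> j c
      by (intro mult_left_mono) (auto simp: K_def simp flip: powr_add intro!: powr_mono)
    finally show "norm (exp (- (c * real j powr \<alpha>)) * real (Suc j) ^ k) \<le> K * real j powr (- 2)"
      by simp
  qed
qed

lemma emeasure_tube_layer_le:
  fixes x :: "'a::euclidean_space"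
  assumes x: "norm x = 1" and h: "0 < h" "h \<le> 1"
  shows "emeasure lborel (tube x (real (Suc j) * h))
    \<le> ennreal (5 * 4 ^ DIM('a) * h ^ (DIM('a) - 1) * real (Suc j) ^ DIM('a))"
proof -
  define r where "r = real (Suc j) * h"
  define d where "d = DIM('a) - 1"
  have n: "DIM('a) = Suc d"
    using DIM_positive[where 'a='a] by (simp add: d_def)
  have r: "0 < r" "r \<le> real (Suc j)"
    using h by (auto simp: r_def intro: mult_left_le)
  have "(2 / r + 3) * r = 2 + 3 * r"
    using r by (simp add: field_simps)
  then have "(2 / r + 3) * (4 * r) ^ DIM('a) = 4 ^ DIM('a) * r ^ d * (2 + 3 * r)"
    by (simp add: n power_mult_distrib mult_ac)
  also have "r ^ d = h ^ d * real (Suc j) ^ d"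
    by (simp add: r_def power_mult_distrib)
  also have "4 ^ DIM('a) * (h ^ d * real (Suc j) ^ d) * (2 + 3 * r)
      = 4 ^ DIM('a) * h ^ d * (real (Suc j) ^ d * (2 + 3 * r))"
    by (simp add: mult_ac)
  also have "\<dots> \<le> 4 ^ DIM('a) * h ^ d * (real (Suc j) ^ d * (5 * real (Suc j)))"
    using r h by (intro mult_left_mono) auto
  also have "\<dots> = 5 * 4 ^ DIM('a) * h ^ d * real (Suc j) ^ DIM('a)"
    by (simp only: n power_Suc mult_ac)
  finally have "(2 / r + 3) * (4 * r) ^ DIM('a) \<le> 5 * 4 ^ DIM('a) * h ^ d * real (Suc j) ^ DIM('a)" .
  then show ?thesis
    using emeasure_tube_le[OF x r(1)] unfolding r_def d_def
    by (meson ennreal_leI order_trans)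
qed

text \<open>A point at scaled distance \<open>u\<close> from the axis lies in the tube of radius \<open>(\<lfloor>u\<rfloor> + 1) h\<close>.\<close>

lemma exp_reject_le_suminf_tube:
  fixes x z :: "'a::euclidean_space"
  assumes c: "c > 0" and \<alpha>: "\<alpha> > 0" and h: "h > 0"
  shows "ennreal (exp (- (c * (norm (z - (z \<bullet> x) *\<^sub>R x) / h) powr \<alpha>))) * indicator (ball 0 1) z
    \<le> (\<Sum>j. ennreal (exp (- (c * real j powr \<alpha>))) * indicator (tube x (real (Suc j) * h)) z)"
proof (cases "z \<in> ball 0 1")
  case True
  define u where "u = norm (z - (z \<bullet> x) *\<^sub>R x) / h"
  define j where "j = nat \<lfloor>u\<rfloor>"
  have "u \<ge> 0"
    using h by (simp add: u_def)
  then have "real j \<le> u" "u < real j + 1"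
    by (simp_all add: j_def)
  then have "z \<in> tube x (real (Suc j) * h)"
    using True h by (simp add: tube_def u_def field_simps)
  have "c * real j powr \<alpha> \<le> c * u powr \<alpha>"
    using \<open>real j \<le> u\<close> c \<alpha> by (intro mult_left_mono powr_mono2) auto
  then have "ennreal (exp (- (c * u powr \<alpha>))) * indicator (ball 0 1) z
      \<le> ennreal (exp (- (c * real j powr \<alpha>))) * indicator (tube x (real (Suc j) * h)) z"
    using True \<open>z \<in> tube x _\<close> by (simp add: ennreal_leI)
  also have "\<dots> \<le> (\<Sum>j. ennreal (exp (- (c * real j powr \<alpha>))) * indicator (tube x (real (Suc j) * h)) z)"
    using sum_le_suminf[OF summableI, of "{j}"] by simp
  finally show ?thesis
    by (simp add: u_def)
qed simp

lemma nn_integral_exp_reject_le: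
  fixes x :: "'a::euclidean_space"
  assumes x: "norm x = 1" and c: "c > 0" and \<alpha>: "\<alpha> > 0" and h: "0 < h" "h \<le> 1"
  shows "(\<integral>\<^sup>+z. ennreal (exp (- (c * (norm (z - (z \<bullet> x) *\<^sub>R x) / h) powr \<alpha>))) * indicator (ball 0 1) z \<partial>lborel)
    \<le> ennreal (5 * 4 ^ DIM('a) * h ^ (DIM('a) - 1) *
         (\<Sum>j. exp (- (c * real j powr \<alpha>)) * real (Suc j) ^ DIM('a)))"
proof -
  let ?e = "\<lambda>j. exp (- (c * real j powr \<alpha>))" and ?C = "5 * 4 ^ DIM('a) * h ^ (DIM('a) - 1)"
  have "(\<integral>\<^sup>+z. ennreal (exp (- (c * (norm (z - (z \<bullet> x) *\<^sub>R x) / h) powr \<alpha>))) * indicator (ball 0 1) z \<partial>lborel)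
      \<le> (\<integral>\<^sup>+z. (\<Sum>j. ennreal (?e j) * indicator (tube x (real (Suc j) * h)) z) \<partial>lborel)"
    by (intro nn_integral_mono exp_reject_le_suminf_tube c \<alpha> h)
  also have "\<dots> = (\<Sum>j. ennreal (?e j) * emeasure lborel (tube x (real (Suc j) * h)))"
    by (simp add: nn_integral_suminf nn_integral_cmult_indicator tube_in_sets)
  also have "\<dots> \<le> (\<Sum>j. ennreal (?C * (?e j * real (Suc j) ^ DIM('a))))"
  proof (intro suminf_le summableI)
    fix j
    have "ennreal (?e j) * emeasure lborel (tube x (real (Suc j) * h))
        \<le> ennreal (?e j) * ennreal (?C * real (Suc j) ^ DIM('a))"
      using emeasure_tube_layer_le[OF x h] by (intro mult_left_mono) simp_all
    also have "\<dots> = ennreal (?C * (?e j * real (Suc j) ^ DIM('a)))"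
      using h by (simp flip: ennreal_mult add: mult_ac)
    finally show "ennreal (?e j) * emeasure lborel (tube x (real (Suc j) * h))
        \<le> ennreal (?C * (?e j * real (Suc j) ^ DIM('a)))" .
  qed
  also have "\<dots> = ennreal (?C * (\<Sum>j. ?e j * real (Suc j) ^ DIM('a)))"
    using h by (intro suminf_ennreal_eq sums_mult summable_sums summable_exp_neg_powr_mult_power c \<alpha>) auto
  finally show ?thesis .
qed

lemma nn_integral_ball_decay_le:
  fixes x :: "'a::euclidean_space"
  assumes x: "norm x = 1" and c: "c > 0" and \<alpha>: "\<alpha> > 0" and h: "0 < h" "h \<le> 1"
    and a: "a \<ge> 0"
  shows "(\<integral>\<^sup>+z. ennreal (a + exp (- (c * (sqrt (1 - (x \<bullet> (z /\<^sub>R norm z))\<^sup>2) / h) powr \<alpha>)))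
      * indicator (ball 0 1 - {0}) z \<partial>lborel)
    \<le> ennreal (2 ^ DIM('a) * a + 5 * 4 ^ DIM('a) * h ^ (DIM('a) - 1) *
         (\<Sum>j. exp (- (c * real j powr \<alpha>)) * real (Suc j) ^ DIM('a)))"
    (is "?lhs \<le> ennreal (_ + ?L)")
proof -
  define F where "F z = exp (- (c * (norm (z - (z \<bullet> x) *\<^sub>R x) / h) powr \<alpha>))" for z :: 'a
  have "0 \<le> ?L"
    using h by (intro mult_nonneg_nonneg suminf_nonneg summable_exp_neg_powr_mult_power c \<alpha>) auto
  have "?lhs \<le> (\<integral>\<^sup>+z. ennreal a * indicator (cball 0 1) z + ennreal (F z) * indicator (ball 0 1) z \<partial>lborel)"
  proof (intro nn_integral_mono)
    fix z :: 'a
    have "exp (- (c * (sqrt (1 - (x \<bullet> (z /\<^sub>R norm z))\<^sup>2) / h) powr \<alpha>)) \<le> F z"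
      if "z \<in> ball 0 1 - {0}"
    proof -
      have "norm (z - (z \<bullet> x) *\<^sub>R x) / h \<le> sqrt (1 - (x \<bullet> (z /\<^sub>R norm z))\<^sup>2) / h"
        using that x h norm_reject_le[of x z] by (intro divide_right_mono) auto
      then show ?thesis
        unfolding F_def using c \<alpha> h by (auto intro!: mult_left_mono powr_mono2)
    qed
    then show "ennreal (a + exp (- (c * (sqrt (1 - (x \<bullet> (z /\<^sub>R norm z))\<^sup>2) / h) powr \<alpha>)))
        * indicator (ball 0 1 - {0}) z
        \<le> ennreal a * indicator (cball 0 1) z + ennreal (F z) * indicator (ball 0 1) z"
      using a by (auto simp: F_def indicator_def ennreal_leI simp flip: ennreal_plus)
  qed
  also have "\<dots> = ennreal a * emeasure lborel (cball (0::'a) 1)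
      + (\<integral>\<^sup>+z. ennreal (F z) * indicator (ball 0 1) z \<partial>lborel)"
  proof -
    have [measurable]: "cball (0::'a) 1 \<in> sets borel" "ball (0::'a) 1 \<in> sets borel"
      by (simp_all add: borel_closed borel_open)
    have "(\<lambda>z. ennreal a * indicator (cball (0::'a) 1) z) \<in> borel_measurable lborel"
      "(\<lambda>z. ennreal (F z) * indicator (ball (0::'a) 1) z) \<in> borel_measurable lborel"
      unfolding F_def by measurable
    then show ?thesis
      by (simp add: nn_integral_add nn_integral_cmult_indicator)
  qed
  also have "\<dots> \<le> ennreal a * ennreal (2 ^ DIM('a)) + ennreal ?L"
    using emeasure_cball_le[of 1 "0::'a"] nn_integral_exp_reject_le[OF x c \<alpha> h]
    by (intro add_mono mult_left_mono) (auto simp: F_def)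
  also have "\<dots> = ennreal (2 ^ DIM('a) * a + ?L)"
    using a \<open>0 \<le> ?L\<close> by (simp add: ennreal_mult ennreal_plus mult.commute)
  finally show ?thesis .
qed

lemma nn_integral_sphere_decay_le:
  fixes x :: "real^'n::finite"
  assumes x: "x \<in> sphere 0 1" and c: "c > 0" and \<alpha>: "\<alpha> > 0" and h: "0 < h" "h \<le> 1"
    and a: "a \<ge> 0"
  shows "(\<integral>\<^sup>+y. ennreal (a + exp (- (c * (sqrt (1 - (x \<bullet> y)\<^sup>2) / h) powr \<alpha>))) \<partial>sphere_measure TYPE('n))
    \<le> ennreal (real CARD('n) * (2 ^ CARD('n) * a + 5 * 4 ^ CARD('n) * h ^ (CARD('n) - 1) *
         (\<Sum>j. exp (- (c * real j powr \<alpha>)) * real (Suc j) ^ CARD('n))))"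
    (is "_ \<le> ennreal (_ * ?B)")
proof -
  have "0 \<le> ?B"
    using a h by (intro add_nonneg_nonneg mult_nonneg_nonneg suminf_nonneg summable_exp_neg_powr_mult_power c \<alpha>) auto
  have "(\<integral>\<^sup>+y. ennreal (a + exp (- (c * (sqrt (1 - (x \<bullet> y)\<^sup>2) / h) powr \<alpha>))) \<partial>sphere_measure TYPE('n))
      \<le> real CARD('n) * ennreal ?B"
    using nn_integral_ball_decay_le[of x c \<alpha> h a] x c \<alpha> h a
    by (subst nn_integral_sphere_measure) (auto intro: mult_left_mono)
  then show ?thesis
    using \<open>0 \<le> ?B\<close> by (simp add: ennreal_mult ennreal_of_nat_eq_real_of_nat)
qed

section \<open>Powers of the covariance function\<close>

lemma covariance_le_of_hoelder:
  fixes \<kappa> :: "real \<Rightarrow> real"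
  assumes hoelder: "\<forall>\<theta>. \<bar>\<theta>\<bar> \<le> \<epsilon> \<longrightarrow> 1 - \<kappa> (cos \<theta>) \<ge> C1 * \<bar>\<theta>\<bar> powr \<alpha>"
    and C1: "C1 > 0" and \<alpha>: "\<alpha> > 0"
    and \<theta>0: "0 \<le> \<theta>0" "\<theta>0 \<le> \<epsilon>" "\<theta>0 \<le> pi" and t: "cos \<theta>0 \<le> t" "t \<le> 1"
  shows "\<kappa> t \<le> 1 - C1 * sqrt (1 - t\<^sup>2) powr \<alpha>"
proof -
  define \<theta> where "\<theta> = arccos t"
  have "-1 \<le> t"
    using cos_ge_minus_one[of \<theta>0] t by linarith
  then have \<theta>: "0 \<le> \<theta>" "\<theta> \<le> pi" "cos \<theta> = t" "sin \<theta> = sqrt (1 - t\<^sup>2)"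
    using t by (auto simp: \<theta>_def arccos_bounded sin_arccos)
  have "\<theta> \<le> \<theta>0"
    using arccos_le_arccos[OF cos_ge_minus_one t] arccos_cos[OF \<theta>0(1,3)] by (simp add: \<theta>_def)
  have "sqrt (1 - t\<^sup>2) powr \<alpha> \<le> \<theta> powr \<alpha>"
    using \<theta> \<alpha> sin_x_le_x[of \<theta>] sin_ge_zero[of \<theta>] by (intro powr_mono2) auto
  then show ?thesis
    using hoelder[rule_format, of \<theta>] \<theta> \<open>\<theta> \<le> \<theta>0\<close> \<theta>0 C1
    by (smt (verit) mult_left_mono)
qed

lemma covariance_near_one:
  fixes \<kappa> :: "real \<Rightarrow> real"
  assumes cont: "continuous_on {-1..1} \<kappa>" and k1: "\<kappa> 1 = 1"
    and C1: "C1 > 0" and \<alpha>: "\<alpha> > 0" and \<epsilon>: "\<epsilon> > 0"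
    and hoelder: "\<forall>\<theta>. \<bar>\<theta>\<bar> \<le> \<epsilon> \<longrightarrow> 1 - \<kappa> (cos \<theta>) \<ge> C1 * \<bar>\<theta>\<bar> powr \<alpha>"
  obtains t0 where "-1 \<le> t0" "t0 < 1"
    "\<And>t. t0 < t \<Longrightarrow> t \<le> 1 \<Longrightarrow> \<bar>\<kappa> t\<bar> \<le> exp (- (C1 * sqrt (1 - t\<^sup>2) powr \<alpha>))"
proof -
  obtain \<delta> where \<delta>: "\<delta> > 0" and near: "\<And>t. t \<in> {-1..1} \<Longrightarrow> dist t 1 < \<delta> \<Longrightarrow> dist (\<kappa> t) (\<kappa> 1) < 1/2"
    using continuous_on_iff[THEN iffD1, OF cont, rule_format, of 1 "1/2"] by auto
  define \<theta>0 where "\<theta>0 = min \<epsilon> pi"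
  have \<theta>0: "0 < \<theta>0" "\<theta>0 \<le> \<epsilon>" "\<theta>0 \<le> pi"
    using \<epsilon> by (auto simp: \<theta>0_def)
  define t0 where "t0 = max (1 - \<delta>/2) (cos \<theta>0)"
  have "cos \<theta>0 < 1"
    using cos_monotone_0_pi[of 0 \<theta>0] \<theta>0 by simp
  then have "t0 < 1"
    using \<delta> by (simp add: t0_def)
  moreover have "-1 \<le> t0"
    unfolding t0_def by (simp add: max.coboundedI2)
  moreover have "\<bar>\<kappa> t\<bar> \<le> exp (- (C1 * sqrt (1 - t\<^sup>2) powr \<alpha>))" if t: "t0 < t" "t \<le> 1" for t
  proof -
    have "dist (\<kappa> t) 1 < 1/2"
      using near[of t] t \<open>-1 \<le> t0\<close> k1 by (simp add: t0_def dist_real_def)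
    then have "\<kappa> t > 0"
      unfolding dist_real_def by linarith
    have "\<kappa> t \<le> 1 - C1 * sqrt (1 - t\<^sup>2) powr \<alpha>"
      using t by (intro covariance_le_of_hoelder[OF hoelder C1 \<alpha>, of \<theta>0]) (use \<theta>0 in \<open>auto simp: t0_def\<close>)
    also have "\<dots> \<le> exp (- (C1 * sqrt (1 - t\<^sup>2) powr \<alpha>))"
      using exp_ge_add_one_self[of "- (C1 * sqrt (1 - t\<^sup>2) powr \<alpha>)"] by simp
    finally show ?thesis
      using \<open>\<kappa> t > 0\<close> by simp
  qed
  ultimately show ?thesis
    using that by blast
qed

lemma covariance_away_from_one:
  fixes \<kappa> :: "real \<Rightarrow> real"
  assumes cont: "continuous_on {-1..1} \<kappa>"
    and lt1: "\<forall>t\<in>{-1..1}. t \<noteq> 1 \<longrightarrow> \<bar>\<kappa> t\<bar> < 1"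
    and t0: "-1 \<le> t0" "t0 < 1"
  obtains \<rho> where "0 < \<rho>" "\<rho> < 1" "\<And>t. t \<in> {-1..t0} \<Longrightarrow> \<bar>\<kappa> t\<bar> \<le> \<rho>"
proof -
  have "continuous_on {-1..t0} (\<lambda>t. \<bar>\<kappa> t\<bar>)"
    using t0 by (intro continuous_on_rabs continuous_on_subset[OF cont]) auto
  then obtain t1 where t1: "t1 \<in> {-1..t0}" and max: "\<And>t. t \<in> {-1..t0} \<Longrightarrow> \<bar>\<kappa> t\<bar> \<le> \<bar>\<kappa> t1\<bar>"
    using continuous_attains_sup[of "{-1..t0}" "\<lambda>t. \<bar>\<kappa> t\<bar>"] t0 by auto
  have "\<bar>\<kappa> t1\<bar> < 1"
    using lt1 t1 t0 by auto
  then show ?thesis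
    using max by (intro that[of "max \<bar>\<kappa> t1\<bar> (1/2)"]) (auto simp: le_max_iff_disj)
qed

lemma covariance_power_le:
  fixes \<kappa> :: "real \<Rightarrow> real"
  assumes cont: "continuous_on {-1..1} \<kappa>" and k1: "\<kappa> 1 = 1"
    and pos: "C1 > 0" "\<alpha> > 0" "\<epsilon> > 0"
    and lt1: "\<forall>t\<in>{-1..1}. t \<noteq> 1 \<longrightarrow> \<bar>\<kappa> t\<bar> < 1"
    and hoelder: "\<forall>\<theta>. \<bar>\<theta>\<bar> \<le> \<epsilon> \<longrightarrow> 1 - \<kappa> (cos \<theta>) \<ge> C1 * \<bar>\<theta>\<bar> powr \<alpha>"
  obtains \<rho> where "0 < \<rho>" "\<rho> < 1"
    "\<And>t q. t \<in> {-1..1} \<Longrightarrow> \<bar>\<kappa> t\<bar> ^ q \<le> \<rho> ^ q + exp (- (real q * C1 * sqrt (1 - t\<^sup>2) powr \<alpha>))"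
proof -
  obtain t0 where t0: "-1 \<le> t0" "t0 < 1"
    and near: "\<And>t. t0 < t \<Longrightarrow> t \<le> 1 \<Longrightarrow> \<bar>\<kappa> t\<bar> \<le> exp (- (C1 * sqrt (1 - t\<^sup>2) powr \<alpha>))"
    using covariance_near_one[OF cont k1 pos hoelder] by blast
  obtain \<rho> where \<rho>: "0 < \<rho>" "\<rho> < 1" and away: "\<And>t. t \<in> {-1..t0} \<Longrightarrow> \<bar>\<kappa> t\<bar> \<le> \<rho>"
    using covariance_away_from_one[OF cont lt1, of t0] t0 by auto
  have "\<bar>\<kappa> t\<bar> ^ q \<le> \<rho> ^ q + exp (- (real q * C1 * sqrt (1 - t\<^sup>2) powr \<alpha>))"
    if "t \<in> {-1..1}" for t q
  proof (cases "t \<le> t0")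
    case True
    then have "\<bar>\<kappa> t\<bar> ^ q \<le> \<rho> ^ q"
      using away that by (intro power_mono) auto
    then show ?thesis
      by (smt (verit) exp_gt_zero)
  next
    case False
    then have "\<bar>\<kappa> t\<bar> ^ q \<le> exp (- (C1 * sqrt (1 - t\<^sup>2) powr \<alpha>)) ^ q"
      using near that by (intro power_mono) auto
    also have "\<dots> = exp (- (real q * C1 * sqrt (1 - t\<^sup>2) powr \<alpha>))"
      by (simp add: exp_of_nat_mult[symmetric] mult.assoc)
    finally show ?thesis
      using \<rho> by (smt (verit) zero_le_power)
  qed
  then show ?thesis
    using that \<rho> by blast
qed

section \<open>The weighted covariance moments\<close>

lemma power_mult_geometric_bounded:
  fixes \<rho> :: real
  assumes "0 < \<rho>" "\<rho> < 1"
  obtains K where "\<And>q. real q ^ p * \<rho> ^ q \<le> K"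
proof (cases "p = 0")
  case True
  then show ?thesis
    using assms by (intro that[of 1]) (simp add: power_le_one)
next
  case False
  define l where "l = - ln \<rho>"
  have "l > 0"
    using assms by (simp add: l_def)
  have "real q ^ p * \<rho> ^ q \<le> real p ^ p / l ^ p" for q
  proof -
    have "\<rho> ^ q = exp (ln \<rho>) ^ q"
      using assms by simp
    also have "\<dots> = exp (- (l * real q))"
      by (simp add: l_def mult.commute flip: exp_of_nat_mult)
    finally have "\<rho> ^ q = exp (- (l * real q))" .
    moreover have "(l * real q) ^ p * exp (- (l * real q)) \<le> real p ^ p"
      using False \<open>l > 0\<close> by (intro power_mult_exp_neg_le) auto
    ultimately show ?thesis
      using \<open>l > 0\<close> by (simp add: power_mult_distrib field_simps)
  qed
  then show ?thesis
    by (rule that)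
qed

lemma power_mult_powr_le_one:
  fixes x \<alpha> :: real
  assumes x: "1 \<le> x" and \<alpha>: "\<alpha> > 0" and p: "real p \<le> real d / \<alpha>"
  shows "x ^ p * (x powr (- 1 / \<alpha>)) ^ d \<le> 1"
proof -
  have "(x powr (- 1 / \<alpha>)) ^ d = x powr (- (real d / \<alpha>))"
    using x by (simp add: powr_power)
  moreover have "x ^ p = x powr real p"
    using x by (simp add: powr_realpow)
  ultimately have "x ^ p * (x powr (- 1 / \<alpha>)) ^ d = x powr (real p - real d / \<alpha>)"
    by (simp add: powr_add[symmetric])
  also have "\<dots> \<le> x powr 0"
    using x p by (intro powr_mono) auto
  finally show ?thesis
    using x by simp
qed

lemma abs_sphere_integral_covariance_power_le:
  fixes \<kappa> :: "real \<Rightarrow> real" and x :: "real^'n::finite"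
  assumes x: "x \<in> sphere 0 1" and C1: "C1 > 0" and \<alpha>: "\<alpha> > 0" and q: "q \<ge> 1" and \<rho>: "\<rho> \<ge> 0"
    and kb: "\<And>t. t \<in> {-1..1} \<Longrightarrow> \<bar>\<kappa> t\<bar> ^ q \<le> \<rho> ^ q + exp (- (real q * C1 * sqrt (1 - t\<^sup>2) powr \<alpha>))"
  shows "\<bar>LINT y|sphere_measure TYPE('n). \<kappa> (x \<bullet> y) ^ q\<bar>
    \<le> real CARD('n) * (2 ^ CARD('n) * \<rho> ^ q + 5 * 4 ^ CARD('n) * (real q powr (- 1 / \<alpha>)) ^ (CARD('n) - 1) *
         (\<Sum>j. exp (- (C1 * real j powr \<alpha>)) * real (Suc j) ^ CARD('n)))"
proof (rule abs_integral_le_of_nn_integral_le)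
  define h where "h = real q powr (- 1 / \<alpha>)"
  have "h \<le> real q powr 0"
    unfolding h_def using q \<alpha> by (intro powr_mono) auto
  then have h: "0 < h" "h \<le> 1"
    using q by (auto simp: h_def)
  have "h powr \<alpha> = real q powr (- 1)"
    unfolding h_def powr_powr using \<alpha> by simp
  then have "h powr \<alpha> = inverse (real q)"
    using q by (simp add: powr_minus)
  then have scale: "real q * C1 * s powr \<alpha> = C1 * (s / h) powr \<alpha>" if "s \<ge> 0" for s
    using that h by (simp add: powr_divide field_simps)
  have "ennreal \<bar>\<kappa> (x \<bullet> y) ^ q\<bar> \<le> ennreal (\<rho> ^ q + exp (- (C1 * (sqrt (1 - (x \<bullet> y)\<^sup>2) / h) powr \<alpha>)))"
    if "y \<in> sphere 0 1" for y
  proof -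
    have "\<bar>x \<bullet> y\<bar> \<le> 1"
      using Cauchy_Schwarz_ineq2[of x y] x that by simp
    then have "x \<bullet> y \<in> {-1..1}" "0 \<le> sqrt (1 - (x \<bullet> y)\<^sup>2)"
      by (auto simp: abs_square_le_1)
    then show ?thesis
      using kb[of "x \<bullet> y"] scale by (intro ennreal_leI) (simp add: power_abs)
  qed
  then have "(\<integral>\<^sup>+y. ennreal \<bar>\<kappa> (x \<bullet> y) ^ q\<bar> \<partial>sphere_measure TYPE('n))
      \<le> (\<integral>\<^sup>+y. ennreal (\<rho> ^ q + exp (- (C1 * (sqrt (1 - (x \<bullet> y)\<^sup>2) / h) powr \<alpha>))) \<partial>sphere_measure TYPE('n))"
    by (intro nn_integral_mono) (simp add: space_sphere_measure)
  also have "\<dots> \<le> ennreal (real CARD('n) * (2 ^ CARD('n) * \<rho> ^ q + 5 * 4 ^ CARD('n) * h ^ (CARD('n) - 1) *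
         (\<Sum>j. exp (- (C1 * real j powr \<alpha>)) * real (Suc j) ^ CARD('n))))"
    using \<rho> by (intro nn_integral_sphere_decay_le x C1 \<alpha> h) simp
  finally show "(\<integral>\<^sup>+y. ennreal \<bar>\<kappa> (x \<bullet> y) ^ q\<bar> \<partial>sphere_measure TYPE('n))
      \<le> ennreal (real CARD('n) * (2 ^ CARD('n) * \<rho> ^ q + 5 * 4 ^ CARD('n) * (real q powr (- 1 / \<alpha>)) ^ (CARD('n) - 1) *
         (\<Sum>j. exp (- (C1 * real j powr \<alpha>)) * real (Suc j) ^ CARD('n))))"
    by (simp add: h_def)
  show "0 \<le> real CARD('n) * (2 ^ CARD('n) * \<rho> ^ q + 5 * 4 ^ CARD('n) * (real q powr (- 1 / \<alpha>)) ^ (CARD('n) - 1) *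
         (\<Sum>j. exp (- (C1 * real j powr \<alpha>)) * real (Suc j) ^ CARD('n)))"
    using \<rho> C1 \<alpha> by (intro mult_nonneg_nonneg add_nonneg_nonneg suminf_nonneg summable_exp_neg_powr_mult_power) auto
qed

lemma abs_sphere_double_integral_covariance_power_le:
  fixes \<kappa> :: "real \<Rightarrow> real"
  assumes C1: "C1 > 0" and \<alpha>: "\<alpha> > 0" and q: "q \<ge> 1" and \<rho>: "\<rho> \<ge> 0"
    and kb: "\<And>t. t \<in> {-1..1} \<Longrightarrow> \<bar>\<kappa> t\<bar> ^ q \<le> \<rho> ^ q + exp (- (real q * C1 * sqrt (1 - t\<^sup>2) powr \<alpha>))"
  shows "\<bar>LINT x|sphere_measure TYPE('n::finite). LINT y|sphere_measure TYPE('n). \<kappa> (x \<bullet> y) ^ q\<bar>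
    \<le> real CARD('n) * (2 ^ CARD('n) * \<rho> ^ q + 5 * 4 ^ CARD('n) * (real q powr (- 1 / \<alpha>)) ^ (CARD('n) - 1) *
         (\<Sum>j. exp (- (C1 * real j powr \<alpha>)) * real (Suc j) ^ CARD('n))) * (real CARD('n) * 2 ^ CARD('n))"
  using abs_sphere_integral_covariance_power_le[OF _ C1 \<alpha> q \<rho> kb] \<rho> C1 \<alpha>
  by (intro abs_sphere_double_integral_le mult_nonneg_nonneg add_nonneg_nonneg suminf_nonneg
      summable_exp_neg_powr_mult_power) auto

lemma sphere_covariance_moment_weight_bounded:
  fixes \<kappa> :: "real \<Rightarrow> real"
  assumes cont: "continuous_on {-1..1} \<kappa>" and k1: "\<kappa> 1 = 1"
    and pos: "C1 > 0" "\<alpha> > 0" "\<epsilon> > 0"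
    and lt1: "\<forall>t\<in>{-1..1}. t \<noteq> 1 \<longrightarrow> \<bar>\<kappa> t\<bar> < 1"
    and hoelder: "\<forall>\<theta>. \<bar>\<theta>\<bar> \<le> \<epsilon> \<longrightarrow> 1 - \<kappa> (cos \<theta>) \<ge> C1 * \<bar>\<theta>\<bar> powr \<alpha>"
    and pd: "real p \<le> real (CARD('n::finite) - 1) / \<alpha>"
  obtains K where "\<And>q. q \<ge> 1 \<Longrightarrow>
    real q ^ p * \<bar>LINT x|sphere_measure TYPE('n). LINT y|sphere_measure TYPE('n). \<kappa> (x \<bullet> y) ^ q\<bar> \<le> K"
proof -
  obtain \<rho> where \<rho>: "0 < \<rho>" "\<rho> < 1"
    and kb: "\<And>t q. t \<in> {-1..1} \<Longrightarrow> \<bar>\<kappa> t\<bar> ^ q \<le> \<rho> ^ q + exp (- (real q * C1 * sqrt (1 - t\<^sup>2) powr \<alpha>))"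
    using covariance_power_le[OF cont k1 pos lt1 hoelder] by blast
  obtain B where B: "\<And>q. real q ^ p * \<rho> ^ q \<le> B"
    using power_mult_geometric_bounded[OF \<rho>] by blast
  define n where "n = CARD('n)"
  define T where "T = (\<Sum>j. exp (- (C1 * real j powr \<alpha>)) * real (Suc j) ^ n)"
  have "T \<ge> 0"
    unfolding T_def using pos by (intro suminf_nonneg summable_exp_neg_powr_mult_power) auto
  have "real q ^ p * \<bar>LINT x|sphere_measure TYPE('n). LINT y|sphere_measure TYPE('n). \<kappa> (x \<bullet> y) ^ q\<bar>
      \<le> real n * 2 ^ n * real n * (2 ^ n * B + 5 * 4 ^ n * T * 1)" if q: "q \<ge> 1" for q
  proof -
    define h where "h = real q powr (- 1 / \<alpha>)"
    have "real q ^ p * h ^ (n - 1) \<le> 1"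
      using q pos pd unfolding h_def n_def by (intro power_mult_powr_le_one) auto
    have "real q ^ p * \<bar>LINT x|sphere_measure TYPE('n). LINT y|sphere_measure TYPE('n). \<kappa> (x \<bullet> y) ^ q\<bar>
        \<le> real q ^ p * (real n * (2 ^ n * \<rho> ^ q + 5 * 4 ^ n * h ^ (n - 1) * T) * (real n * 2 ^ n))"
      using abs_sphere_double_integral_covariance_power_le[OF pos(1,2) q _ kb] \<rho>
      unfolding h_def n_def T_def by (intro mult_left_mono) auto
    also have "\<dots> = real n * 2 ^ n * real n *
        (2 ^ n * (real q ^ p * \<rho> ^ q) + 5 * 4 ^ n * T * (real q ^ p * h ^ (n - 1)))"
      by (simp add: algebra_simps)
    also have "\<dots> \<le> real n * 2 ^ n * real n * (2 ^ n * B + 5 * 4 ^ n * T * 1)"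
      using B[of q] \<open>T \<ge> 0\<close> \<open>real q ^ p * h ^ (n - 1) \<le> 1\<close>
      by (intro mult_left_mono add_mono) auto
    finally show ?thesis .
  qed
  then show ?thesis
    using that by blast
qed

theorem mainTheorem6:
  fixes M :: "'w measure"
    and B :: "real^'n::finite \<Rightarrow> 'w \<Rightarrow> real"
    and \<kappa> :: "real \<Rightarrow> real"
    and f :: "real \<Rightarrow> real"
    and C1 \<alpha> \<epsilon> :: real
    and p :: nat
  assumes dim: "CARD('n) \<ge> 2"
    and field: "gaussian_field M B \<kappa>"
    and iso: "isotropic_field M B"
    and cont: "continuous_on {-1..1} \<kappa>"
    and k1: "\<kappa> 1 = 1"
    and pos: "C1 > 0" "\<alpha> > 0" "\<epsilon> > 0"
    and lt1: "\<forall>t\<in>{-1..1}. t \<noteq> 1 \<longrightarrow> \<bar>\<kappa> t\<bar> < 1"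
    and hoelder: "\<forall>\<theta>. \<bar>\<theta>\<bar> \<le> \<epsilon> \<longrightarrow> 1 - \<kappa> (cos \<theta>) \<ge> C1 * \<bar>\<theta>\<bar> powr \<alpha>"
    and fL2: "L2_gauss f"
    and pd: "real p \<le> real (CARD('n) - 1) / \<alpha>"
  shows "in_D_p2 (sphere_measure TYPE('n)) \<kappa> f p"
  \<comment> \<open>\<open>in_D_p2\<close> only involves \<open>\<kappa>\<close> and the Hermite coefficients of \<open>f\<close>, so \<open>dim\<close>, \<open>field\<close> and \<open>iso\<close> are not needed.\<close>
proof -
  let ?I = "\<lambda>q. LINT x|sphere_measure TYPE('n). LINT y|sphere_measure TYPE('n). \<kappa> (x \<bullet> y) ^ q"
  obtain K where K: "\<And>q. q \<ge> 1 \<Longrightarrow> real q ^ p * \<bar>?I q\<bar> \<le> K"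
    using sphere_covariance_moment_weight_bounded[OF cont k1 pos lt1 hoelder pd] by blast
  show ?thesis
    unfolding in_D_p2_def
  proof (rule summable_comparison_test'[where N = 1])
    show "summable (\<lambda>q. K * (fact q * (hermite_coeff f q)\<^sup>2))"
      using summable_hermite_coeff_sq[OF fL2] by (rule summable_mult)
    fix q :: nat
    assume "q \<ge> 1"
    then have "fact q * (hermite_coeff f q)\<^sup>2 * (real q ^ p * \<bar>?I q\<bar>) \<le> fact q * (hermite_coeff f q)\<^sup>2 * K"
      using K by (intro mult_left_mono) auto
    then show "norm (real q ^ p * fact q * (hermite_coeff f q)\<^sup>2 * ?I q) \<le> K * (fact q * (hermite_coeff f q)\<^sup>2)"
      by (simp add: abs_mult mult_ac)
  qed
qed

end
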